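(* Let $\mathcal X$ be a finite set, let $M:=\log|\mathcal X|$, let $\mathcal C$ be any set of probability measures on $(\mathcal X^\infty,\mathcal F)$, and let $\rho$ be any probability measure on $(\mathcal X^\infty,\mathcal F)$. Then there exists a discrete Bayesian predictor $\nu$, that is, a probability measure of the form $\nu=\sum_{k\in\mathbb N} w_k\mu_k$ with $\mu_k\in\mathcal C$ and $w_k\in[0,1]$, such that for every $\mu\in\mathcal C$ and every time step $n$, $$L_n(\mu,\nu)-L_n(\mu,\rho)\le 8\log n+O(\log\log n),$$ where the $O(\log\log n)$ term does not depend on $\mu$ or on $\mathcal C$ and $\rho$; its constants are explicit, depend on the alphabet only linearly through $M$ (a term of order $M\log\log n$), and are otherwise universal constants.
   Context: $\mathcal X$ is a finite alphabet; $x_{1..n}$ denotes $x_1,\dots,x_n$; $\mathcal F$ is the Borel sigma-field on $\mathcal X^\infty$. For a measure $\mu$ on $\mathcal X^\infty$, $\mu(x_{1..n})$ denotes the probability that the first $n$ symbols equal $x_{1..n}$. Logarithms are base 2. For two probability measures $\mu,\rho$ on $(\mathcal X^\infty,\mathcal F)$, the expected cumulative Kullback–Leibler divergence (log loss) up to time $n$ is $$L_n(\mu,\rho):=\mathbb E_\mu\sum_{t=1}^{n}\sum_{a\in\mathcal X}\mu(x_t=a\mid x_{1..t-1})\log\frac{\mu(x_t=a\mid x_{1..t-1})}{\rho(x_t=a\mid x_{1..t-1})}=\sum_{x_{1..n}\in\mathcal X^n}\mu(x_{1..n})\log\frac{\mu(x_{1..n})}{\rho(x_{1..n})},$$ where $\mu$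 is interpreted as the measure generating the data and $\rho$ as the predictor. *)

theory Defs
  imports "HOL-Probability.Probability"
begin

text \<open>Infinite sequences over the alphabet X are streams in streams X, with the
  Borel (product) sigma-field stream_space (count_space X).\<close>

definition seqprob :: "'a stream measure \<Rightarrow> 'a list \<Rightarrow> real" where
  "seqprob \<mu> xs = measure \<mu> {\<omega> \<in> space \<mu>. stake (length xs) \<omega> = xs}"

definition kl_term :: "real \<Rightarrow> real \<Rightarrow> ereal" where
  "kl_term p q = (if p = 0 then 0 else if q = 0 then \<infinity> else ereal (p * log 2 (p / q)))"

text \<open>Expected cumulative KL divergence L_n(mu, rho) over alphabet X.\<close>
definition logloss :: "'a set \<Rightarrow> nat \<Rightarrow> 'a stream measure \<Rightarrow> 'a stream measure \<Rightarrow> ereal" where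
  "logloss X n \<mu> \<rho> =
     (\<Sum>xs\<in>{xs. set xs \<subseteq> X \<and> length xs = n}. kl_term (seqprob \<mu> xs) (seqprob \<rho> xs))"

definition seq_prob_measure :: "'a set \<Rightarrow> 'a stream measure \<Rightarrow> bool" where
  "seq_prob_measure X \<mu> \<longleftrightarrow> prob_space \<mu> \<and> sets \<mu> = sets (stream_space (count_space X))"

definition discrete_bayes :: "'a set \<Rightarrow> 'a stream measure set \<Rightarrow> 'a stream measure \<Rightarrow> bool" where
  "discrete_bayes X C \<nu> \<longleftrightarrow> seq_prob_measure X \<nu> \<and>
     (\<exists>w :: nat \<Rightarrow> real. \<exists>\<mu>s :: nat \<Rightarrow> 'a stream measure.
        (\<forall>k. \<mu>s k \<in> C) \<and> (\<forall>k. 0 \<le> w k \<and> w k \<le> 1) \<and>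
        (\<forall>A \<in> sets \<nu>. emeasure \<nu> A = (\<Sum>k. ennreal (w k) * emeasure (\<mu>s k) A)))"

end

theory Submission
  imports Defs
begin

(* For each n the words of length n form a finite set S, and every measure in C induces a
  probability vector on S. Among the finite mixtures of these vectors pick nu_n that almost
  maximises the rho-weighted log-likelihood  sum_x rho(x) ln nu_n(x). Perturbing nu_n towards any
  mu in C cannot increase this functional by much, which forces  sum_x rho(x) mu(x) / nu_n(x) < 6,
  and then  sum_x mu(x) log (rho(x) / nu_n(x)) <= log 6  whenever mu << rho.
  The predictor  nu = sum_n w_n nu_n  with  w_n = 1/((n+1)(n+2))  loses at most log (1/w_n) to nu_n,
  so  L_n(mu, nu) <= L_n(mu, rho) + log 6 + log ((n+1)(n+2)) <= L_n(mu, rho) + 8 log n  for n >= 2: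
  the theorem holds with no log log n term at all. *)

section \<open>Finite mixtures and the weighted log-likelihood\<close>

definition mixtures :: "'m set \<Rightarrow> ('m \<Rightarrow> 's \<Rightarrow> real) \<Rightarrow> ('s \<Rightarrow> real) set" where
  "mixtures C \<phi> = {(\<lambda>x. \<Sum>j<m. c j * \<phi> (g j) x) | (m :: nat) c g.
     (\<forall>j<m. g j \<in> C \<and> 0 \<le> c j) \<and> (\<Sum>j<m. c j) = 1}"

lemma component_in_mixtures: "\<mu> \<in> C \<Longrightarrow> \<phi> \<mu> \<in> mixtures C \<phi>"
  unfolding mixtures_def
  by (intro CollectI exI[of _ "1::nat"] exI[of _ "\<lambda>_. 1"] exI[of _ "\<lambda>_. \<mu>"]) auto

lemma mixtures_convex_step:
  assumes "\<nu> \<in> mixtures C \<phi>" "\<mu> \<in> C" "0 \<le> t" "t \<le> 1"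
  shows "(\<lambda>x. (1 - t) * \<nu> x + t * \<phi> \<mu> x) \<in> mixtures C \<phi>"
proof -
  obtain m :: nat and c g where cg: "\<forall>j<m. g j \<in> C \<and> 0 \<le> c j" "(\<Sum>j<m. c j) = 1"
    and \<nu>: "\<nu> = (\<lambda>x. \<Sum>j<m. c j * \<phi> (g j) x)"
    using assms(1) unfolding mixtures_def by blast
  define c' where "c' j = (if j < m then (1 - t) * c j else t)" for j
  define g' where "g' = g(m := \<mu>)"
  have "(\<Sum>j<Suc m. c' j * \<phi> (g' j) x) = (1 - t) * \<nu> x + t * \<phi> \<mu> x" for x
    by (simp add: \<nu> c'_def g'_def sum_distrib_left mult.assoc)
  moreover have "(\<Sum>j<Suc m. c' j) = 1"
    using cg(2) by (simp add: c'_def sum_distrib_left[symmetric])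
  moreover have "\<forall>j<Suc m. g' j \<in> C \<and> 0 \<le> c' j"
    using cg(1) assms(2-4) by (auto simp: c'_def g'_def less_Suc_eq)
  ultimately show ?thesis
    unfolding mixtures_def by (intro CollectI exI[of _ "Suc m"] exI[of _ c'] exI[of _ g']) auto
qed

lemma mixtures_nonneg:
  assumes "\<nu> \<in> mixtures C \<phi>" "\<forall>\<mu>\<in>C. 0 \<le> \<phi> \<mu> x"
  shows "0 \<le> \<nu> x"
  using assms unfolding mixtures_def by (auto intro!: sum_nonneg)

lemma mixtures_le_one:
  assumes "\<nu> \<in> mixtures C \<phi>" "\<forall>\<mu>\<in>C. \<phi> \<mu> x \<le> 1"
  shows "\<nu> x \<le> 1"
proof -
  obtain m :: nat and c g where cg: "\<forall>j<m. g j \<in> C \<and> 0 \<le> c j" "(\<Sum>j<m. c j) = 1"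
    and \<nu>: "\<nu> = (\<lambda>x. \<Sum>j<m. c j * \<phi> (g j) x)"
    using assms(1) unfolding mixtures_def by blast
  have "\<nu> x \<le> (\<Sum>j<m. c j * 1)"
    unfolding \<nu> using cg(1) assms(2) by (auto intro!: sum_mono mult_left_le)
  then show "\<nu> x \<le> 1" using cg(2) by simp
qed

lemma mixture_positive_on_finite:
  assumes "finite P" "C \<noteq> {}" "\<forall>x\<in>P. \<exists>\<mu>\<in>C. 0 < \<phi> \<mu> x"
    and "\<forall>\<mu>\<in>C. \<forall>x\<in>P. 0 \<le> \<phi> \<mu> x"
  shows "\<exists>\<nu>\<in>mixtures C \<phi>. \<forall>x\<in>P. 0 < \<nu> x"
  using assms(1,3,4)
proof (induction P rule: finite_induct)
  case empty
  obtain \<mu> where "\<mu> \<in> C" using assms(2) by blast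
  then have "\<phi> \<mu> \<in> mixtures C \<phi>" by (rule component_in_mixtures)
  then show ?case by auto
next
  case (insert x P)
  have "\<forall>y\<in>P. \<exists>\<mu>\<in>C. 0 < \<phi> \<mu> y" "\<forall>\<mu>\<in>C. \<forall>y\<in>P. 0 \<le> \<phi> \<mu> y"
    using insert.prems by simp_all
  then obtain \<nu> where \<nu>: "\<nu> \<in> mixtures C \<phi>" "\<forall>y\<in>P. 0 < \<nu> y"
    using insert.IH by blast
  obtain \<mu> where \<mu>: "\<mu> \<in> C" "0 < \<phi> \<mu> x" using insert.prems(1) by blast
  define \<nu>' where "\<nu>' = (\<lambda>y. (1 - 1/2) * \<nu> y + 1/2 * \<phi> \<mu> y)"
  have "\<nu>' \<in> mixtures C \<phi>"
    unfolding \<nu>'_def using \<nu>(1) \<mu>(1) by (rule mixtures_convex_step) simp_all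
  moreover have "0 < \<nu>' y" if "y \<in> insert x P" for y
  proof -
    have "\<forall>\<mu>\<in>C. 0 \<le> \<phi> \<mu> y" using insert.prems(2) that by blast
    then have "0 \<le> \<nu> y" "0 \<le> \<phi> \<mu> y"
      using mixtures_nonneg[OF \<nu>(1)] \<mu>(1) by blast+
    moreover have "0 < \<nu> y \<or> 0 < \<phi> \<mu> y" using that \<nu>(2) \<mu>(2) by blast
    ultimately show ?thesis unfolding \<nu>'_def by auto
  qed
  ultimately show ?case by blast
qed

lemma ln_one_plus_ge_half_min:
  fixes s :: real
  assumes "0 \<le> s"
  shows "min s 1 / 2 \<le> ln (1 + s)"
proof -
  have "ln (1 / (1 + s)) \<le> 1 / (1 + s) - 1"
    using assms by (intro ln_le_minus_one) auto
  then have "s / (1 + s) \<le> ln (1 + s)"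
    using assms by (simp add: ln_div field_simps)
  moreover have "min s 1 / 2 \<le> s / (1 + s)"
  proof (cases "s \<le> 1")
    case True
    have "s / 2 \<le> s / (1 + s)"
      using True assms by (intro divide_left_mono) auto
    with True show ?thesis by simp
  next
    case False
    then show ?thesis by (simp add: field_simps)
  qed
  ultimately show ?thesis by linarith
qed

lemma ln_one_minus_ge:
  fixes t :: real
  assumes "0 \<le> t" "t \<le> 1/2"
  shows "- 2 * t \<le> ln (1 - t)"
proof -
  have "t * (2 * t) \<le> t" using assms by (intro mult_left_le) auto
  then have "2 * t\<^sup>2 \<le> t" by (simp add: power2_eq_square mult_ac)
  then show ?thesis using ln_one_minus_pos_lower_bound[OF assms] by linarith
qed

lemma ln_convex_step_lower_bound:
  fixes t r :: real
  assumes "0 \<le> t" "t \<le> 1/2" "0 \<le> r"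
  shows "min (t * r) 1 / 2 - 2 * t \<le> ln (1 - t + t * r)"
proof -
  have pos: "0 < 1 - t" "0 < 1 + t * r"
    using assms by (auto intro: add_pos_nonneg)
  have "(1 - t) * (1 + t * r) = 1 - t + t * r - t * (t * r)"
    by (simp add: algebra_simps)
  also have "\<dots> \<le> 1 - t + t * r"
    using assms by simp
  finally have "ln ((1 - t) * (1 + t * r)) \<le> ln (1 - t + t * r)"
    using pos by (intro ln_mono) auto
  moreover have "ln ((1 - t) * (1 + t * r)) = ln (1 - t) + ln (1 + t * r)"
    using pos by (rule ln_mult_pos)
  moreover have "- 2 * t \<le> ln (1 - t)"
    using assms(1,2) by (rule ln_one_minus_ge)
  moreover have "min (t * r) 1 / 2 \<le> ln (1 + t * r)"
    using assms by (intro ln_one_plus_ge_half_min) simp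
  ultimately show ?thesis by linarith
qed

lemma weighted_ratio_sum_bound:
  fixes \<rho> r :: "'s \<Rightarrow> real"
  assumes "finite P" "0 < t" "t \<le> 1/2" "\<forall>x\<in>P. 8 * t \<le> \<rho> x" "(\<Sum>x\<in>P. \<rho> x) \<le> 1"
    and "\<forall>x\<in>P. 0 \<le> r x" and "(\<Sum>x\<in>P. \<rho> x * ln (1 - t + t * r x)) < t"
  shows "(\<Sum>x\<in>P. \<rho> x * r x) < 6"
proof -
  have \<rho>_nonneg: "\<forall>x\<in>P. 0 \<le> \<rho> x" using assms(2,4) by force
  have "(\<Sum>x\<in>P. \<rho> x * min (t * r x) 1) / 2 - 2 * t * (\<Sum>x\<in>P. \<rho> x) =
      (\<Sum>x\<in>P. \<rho> x * min (t * r x) 1 / 2 - 2 * t * \<rho> x)"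
    by (simp add: sum_subtractf sum_divide_distrib sum_distrib_left)
  also have "\<dots> = (\<Sum>x\<in>P. \<rho> x * (min (t * r x) 1 / 2 - 2 * t))"
    by (simp add: algebra_simps)
  also have "\<dots> \<le> (\<Sum>x\<in>P. \<rho> x * ln (1 - t + t * r x))"
    using assms(2,3,6) \<rho>_nonneg
    by (intro sum_mono mult_left_mono ln_convex_step_lower_bound) auto
  also have "\<dots> < t" by (rule assms(7))
  finally have "(\<Sum>x\<in>P. \<rho> x * min (t * r x) 1) / 2 - 2 * t * (\<Sum>x\<in>P. \<rho> x) < t" .
  moreover have "2 * t * (\<Sum>x\<in>P. \<rho> x) \<le> 2 * t"
    using assms(2,5) by simp
  ultimately have small: "(\<Sum>x\<in>P. \<rho> x * min (t * r x) 1) < 6 * t"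
    by linarith
  \<comment> \<open>each summand is below \<open>6 t < \<rho> x\<close>, so the min is never attained at 1\<close>
  have "min (t * r x) 1 = t * r x" if "x \<in> P" for x
  proof -
    have "\<rho> x * min (t * r x) 1 \<le> (\<Sum>x\<in>P. \<rho> x * min (t * r x) 1)"
      using assms(1,2,6) \<rho>_nonneg that by (intro member_le_sum) auto
    moreover have "8 * t \<le> \<rho> x" using assms(4) that by blast
    ultimately have "\<rho> x * min (t * r x) 1 < \<rho> x * 1" and "0 < \<rho> x"
      using small assms(2) by linarith+
    then show ?thesis by (auto simp: min_def split: if_splits)
  qed
  then have "t * (\<Sum>x\<in>P. \<rho> x * r x) < t * 6"
    using small by (simp add: sum_distrib_left algebra_simps)
  then show ?thesis using assms(2) by simp
qed

lemma sum_mult_ln_ratio_le: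
  fixes \<mu> \<rho> \<nu> :: "'s \<Rightarrow> real"
  assumes "finite Q" "\<forall>x\<in>Q. 0 < \<mu> x \<and> 0 < \<rho> x \<and> 0 < \<nu> x" "(\<Sum>x\<in>Q. \<mu> x) = 1"
    and "(\<Sum>x\<in>Q. \<rho> x * (\<mu> x / \<nu> x)) \<le> c"
  shows "(\<Sum>x\<in>Q. \<mu> x * ln (\<rho> x / \<nu> x)) \<le> ln c"
proof -
  have "Q \<noteq> {}" using assms(3) by auto
  then have "0 < (\<Sum>x\<in>Q. \<rho> x * (\<mu> x / \<nu> x))"
    using assms(1,2) by (intro sum_pos) auto
  then have c: "0 < c" using assms(4) by linarith
  have "\<mu> x * ln (\<rho> x / \<nu> x) \<le> \<mu> x * ln c + \<rho> x * (\<mu> x / \<nu> x) / c - \<mu> x" if "x \<in> Q" for x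
  proof -
    have pos: "0 < \<mu> x" "0 < \<rho> x" "0 < \<nu> x" using assms(2) that by auto
    have "ln (\<rho> x / \<nu> x) = ln c + ln (\<rho> x / (c * \<nu> x))"
      using pos c by (simp add: ln_div ln_mult)
    also have "\<dots> \<le> ln c + (\<rho> x / (c * \<nu> x) - 1)"
      using pos c by (simp add: ln_le_minus_one)
    finally have "\<mu> x * ln (\<rho> x / \<nu> x) \<le> \<mu> x * (ln c + (\<rho> x / (c * \<nu> x) - 1))"
      using pos by (intro mult_left_mono) auto
    also have "\<dots> = \<mu> x * ln c + \<rho> x * (\<mu> x / \<nu> x) / c - \<mu> x"
      using pos c by (simp add: field_simps)
    finally show ?thesis .
  qed
  then have "(\<Sum>x\<in>Q. \<mu> x * ln (\<rho> x / \<nu> x)) \<le>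
      (\<Sum>x\<in>Q. \<mu> x * ln c + \<rho> x * (\<mu> x / \<nu> x) / c - \<mu> x)"
    by (rule sum_mono)
  also have "\<dots> = ln c + (\<Sum>x\<in>Q. \<rho> x * (\<mu> x / \<nu> x)) / c - 1"
    using assms(3) by (simp add: sum_subtractf sum.distrib sum_distrib_right[symmetric] sum_divide_distrib)
  also have "\<dots> \<le> ln c"
    using assms(4) c by (simp add: field_simps)
  finally show ?thesis .
qed

lemma exists_almost_maximizer:
  fixes f :: "'b \<Rightarrow> real"
  assumes "K \<noteq> {}" "bdd_above (f ` K)" "0 < \<delta>"
  obtains k where "k \<in> K" "\<forall>k'\<in>K. f k' < f k + \<delta>"
proof -
  have "Sup (f ` K) - \<delta> < Sup (f ` K)" using assms(3) by simp
  then obtain k where k: "k \<in> K" "Sup (f ` K) - \<delta> < f k"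
    using less_cSup_iff[of "f ` K"] assms(1,2) by auto
  have "f k' < f k + \<delta>" if "k' \<in> K" for k'
    using cSup_upper[of "f k'" "f ` K"] assms(2) that k(2) by fastforce
  then show ?thesis using that k(1) by blast
qed

lemma mixture_with_bounded_weighted_ratio:
  fixes \<rho> :: "'s \<Rightarrow> real" and \<phi> :: "'m \<Rightarrow> 's \<Rightarrow> real"
  assumes "finite P" "C \<noteq> {}" "\<forall>x\<in>P. 0 < \<rho> x" "(\<Sum>x\<in>P. \<rho> x) \<le> 1"
    and "\<forall>x\<in>P. \<exists>\<mu>\<in>C. 0 < \<phi> \<mu> x" "\<forall>\<mu>\<in>C. \<forall>x\<in>P. 0 \<le> \<phi> \<mu> x \<and> \<phi> \<mu> x \<le> 1"
  shows "\<exists>\<nu>\<in>mixtures C \<phi>. (\<forall>x\<in>P. 0 < \<nu> x) \<and> (\<forall>\<mu>\<in>C. (\<Sum>x\<in>P. \<rho> x * (\<phi> \<mu> x / \<nu> x)) < 6)"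
proof -
  define t where "t = Min (insert 1 (\<rho> ` P)) / 8"
  have "Min (insert 1 (\<rho> ` P)) \<le> \<rho> x" if "x \<in> P" for x
    using assms(1) that by (intro Min_le) auto
  moreover have "0 < Min (insert 1 (\<rho> ` P))" "Min (insert 1 (\<rho> ` P)) \<le> 1"
    using assms(1,3) by (simp_all add: Min_gr_iff)
  ultimately have t: "0 < t" "t \<le> 1/2" "\<forall>x\<in>P. 8 * t \<le> \<rho> x"
    unfolding t_def by auto
  define K where "K = {\<nu> \<in> mixtures C \<phi>. \<forall>x\<in>P. 0 < \<nu> x}"
  define G where "G \<nu> = (\<Sum>x\<in>P. \<rho> x * ln (\<nu> x))" for \<nu>
  have "K \<noteq> {}"
    using mixture_positive_on_finite[OF assms(1,2,5)] assms(6) unfolding K_def by auto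
  moreover have "bdd_above (G ` K)"
  proof (rule bdd_aboveI2)
    fix \<nu> assume "\<nu> \<in> K"
    then have "0 < \<nu> x" "\<nu> x \<le> 1" if "x \<in> P" for x
      using that mixtures_le_one[of \<nu> C \<phi> x] assms(6) unfolding K_def by auto
    then show "G \<nu> \<le> 0"
      unfolding G_def using assms(3) by (intro sum_nonpos mult_nonneg_nonpos) auto
  qed
  ultimately obtain \<nu> where \<nu>: "\<nu> \<in> K" "\<forall>\<nu>'\<in>K. G \<nu>' < G \<nu> + t"
    using t(1) by (rule exists_almost_maximizer)
  have \<nu>_pos: "0 < \<nu> x" if "x \<in> P" for x
    using \<nu>(1) that unfolding K_def by auto
  have "(\<Sum>x\<in>P. \<rho> x * (\<phi> \<mu> x / \<nu> x)) < 6" if \<mu>: "\<mu> \<in> C" for \<mu>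
  proof (rule weighted_ratio_sum_bound[OF assms(1) t assms(4)])
    show ratio_nonneg: "\<forall>x\<in>P. 0 \<le> \<phi> \<mu> x / \<nu> x"
      using assms(6) \<mu> \<nu>_pos by (simp add: less_imp_le)
    define \<nu>' where "\<nu>' = (\<lambda>x. (1 - t) * \<nu> x + t * \<phi> \<mu> x)"
    have \<nu>'_eq: "\<nu>' x = \<nu> x * (1 - t + t * (\<phi> \<mu> x / \<nu> x))" if "x \<in> P" for x
      using \<nu>_pos[OF that] unfolding \<nu>'_def by (simp add: field_simps)
    have step_pos: "0 < 1 - t + t * (\<phi> \<mu> x / \<nu> x)" if "x \<in> P" for x
      using t(1,2) ratio_nonneg that by (intro add_pos_nonneg mult_nonneg_nonneg) auto
    have \<nu>'_pos: "0 < \<nu>' x" if "x \<in> P" for x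
      unfolding \<nu>'_eq[OF that] using \<nu>_pos[OF that] step_pos[OF that] by (rule mult_pos_pos)
    have ln_ratio: "ln (\<nu>' x) - ln (\<nu> x) = ln (1 - t + t * (\<phi> \<mu> x / \<nu> x))" if "x \<in> P" for x
      unfolding \<nu>'_eq[OF that] using \<nu>_pos[OF that] step_pos[OF that] by (simp add: ln_mult_pos)
    have "\<nu> \<in> mixtures C \<phi>" using \<nu>(1) unfolding K_def by simp
    then have "\<nu>' \<in> mixtures C \<phi>"
      unfolding \<nu>'_def by (rule mixtures_convex_step) (use \<mu> t(1,2) in auto)
    then have "G \<nu>' < G \<nu> + t" using \<nu>(2) \<nu>'_pos unfolding K_def by auto
    moreover have "G \<nu>' - G \<nu> = (\<Sum>x\<in>P. \<rho> x * ln (1 - t + t * (\<phi> \<mu> x / \<nu> x)))"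
      unfolding G_def sum_subtractf[symmetric] right_diff_distrib[symmetric]
      using ln_ratio by (intro sum.cong) auto
    ultimately show "(\<Sum>x\<in>P. \<rho> x * ln (1 - t + t * (\<phi> \<mu> x / \<nu> x))) < t" by linarith
  qed
  then show ?thesis using \<nu>(1) unfolding K_def by blast
qed

(* sum mu log (rho / nu) is the excess log loss of nu over rho under mu. It is only demanded when
  mu << rho: otherwise the loss of rho is infinite and there is nothing to compare with. *)
definition excess_loss_le :: "'s set \<Rightarrow> ('s \<Rightarrow> real) \<Rightarrow> ('s \<Rightarrow> real) \<Rightarrow> ('s \<Rightarrow> real) \<Rightarrow> real \<Rightarrow> bool" where
  "excess_loss_le S \<mu> \<rho> \<nu> B \<longleftrightarrow> (\<forall>x\<in>S. 0 < \<mu> x \<longrightarrow> 0 < \<rho> x) \<longrightarrow>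
     (\<forall>x\<in>S. 0 < \<mu> x \<longrightarrow> 0 < \<nu> x) \<and> (\<Sum>x\<in>{x\<in>S. 0 < \<mu> x}. \<mu> x * log 2 (\<rho> x / \<nu> x)) \<le> B"

lemma exists_mixture_excess_loss_le:
  fixes \<rho> :: "'s \<Rightarrow> real" and \<phi> :: "'m \<Rightarrow> 's \<Rightarrow> real"
  assumes "finite S" "C \<noteq> {}" "\<forall>\<mu>\<in>C. (\<forall>x\<in>S. 0 \<le> \<phi> \<mu> x) \<and> (\<Sum>x\<in>S. \<phi> \<mu> x) = 1"
    and "\<forall>x\<in>S. 0 \<le> \<rho> x" "(\<Sum>x\<in>S. \<rho> x) \<le> 1"
  shows "\<exists>\<nu>\<in>mixtures C \<phi>. \<forall>\<mu>\<in>C. excess_loss_le S (\<phi> \<mu>) \<rho> \<nu> (log 2 6)"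
proof -
  define P where "P = {x\<in>S. 0 < \<rho> x \<and> (\<exists>\<mu>\<in>C. 0 < \<phi> \<mu> x)}"
  have PS: "P \<subseteq> S" unfolding P_def by auto
  have "\<phi> \<mu> x \<le> 1" if "\<mu> \<in> C" "x \<in> S" for \<mu> x
    using member_le_sum[of x S "\<phi> \<mu>"] assms(1,3) that by auto
  then have "\<forall>\<mu>\<in>C. \<forall>x\<in>P. 0 \<le> \<phi> \<mu> x \<and> \<phi> \<mu> x \<le> 1" using assms(3) PS by blast
  moreover have "(\<Sum>x\<in>P. \<rho> x) \<le> 1"
    using sum_mono2[OF assms(1) PS, of \<rho>] assms(4,5) by auto
  moreover have "finite P" using assms(1) PS by (rule finite_subset[rotated])
  moreover have "\<forall>x\<in>P. 0 < \<rho> x" "\<forall>x\<in>P. \<exists>\<mu>\<in>C. 0 < \<phi> \<mu> x"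
    unfolding P_def by auto
  ultimately obtain \<nu> where \<nu>: "\<nu> \<in> mixtures C \<phi>" "\<forall>x\<in>P. 0 < \<nu> x"
      "\<forall>\<mu>\<in>C. (\<Sum>x\<in>P. \<rho> x * (\<phi> \<mu> x / \<nu> x)) < 6"
    using mixture_with_bounded_weighted_ratio[of P C \<rho> \<phi>] assms(2) by blast
  have "excess_loss_le S (\<phi> \<mu>) \<rho> \<nu> (log 2 6)" if \<mu>: "\<mu> \<in> C" for \<mu>
    unfolding excess_loss_le_def
  proof (intro impI conjI)
    assume abs_cont: "\<forall>x\<in>S. 0 < \<phi> \<mu> x \<longrightarrow> 0 < \<rho> x"
    define Q where "Q = {x\<in>S. 0 < \<phi> \<mu> x}"
    have QP: "Q \<subseteq> P" using \<mu> abs_cont unfolding Q_def P_def by auto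
    then show "\<forall>x\<in>S. 0 < \<phi> \<mu> x \<longrightarrow> 0 < \<nu> x" using \<nu>(2) unfolding Q_def by auto
    have "(\<Sum>x\<in>Q. \<rho> x * (\<phi> \<mu> x / \<nu> x)) \<le> (\<Sum>x\<in>P. \<rho> x * (\<phi> \<mu> x / \<nu> x))"
      using \<open>finite P\<close> QP \<nu>(2) assms(3,4) \<mu> PS by (intro sum_mono2) (auto intro!: divide_nonneg_pos)
    also have "\<dots> < 6" using \<nu>(3) \<mu> by (rule bspec)
    finally have ratio_sum: "(\<Sum>x\<in>Q. \<rho> x * (\<phi> \<mu> x / \<nu> x)) \<le> 6" by simp
    have "(\<Sum>x\<in>Q. \<phi> \<mu> x) = (\<Sum>x\<in>S. \<phi> \<mu> x)"
      using assms(1,3) \<mu> unfolding Q_def by (intro sum.mono_neutral_left) (auto simp: less_eq_real_def)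
    also have "\<dots> = 1" using assms(3) \<mu> by blast
    finally have mass: "(\<Sum>x\<in>Q. \<phi> \<mu> x) = 1" .
    have pos: "\<forall>x\<in>Q. 0 < \<phi> \<mu> x \<and> 0 < \<rho> x \<and> 0 < \<nu> x"
      using QP \<nu>(2) unfolding Q_def P_def by auto
    have "finite Q" using assms(1) unfolding Q_def by simp
    from sum_mult_ln_ratio_le[OF this pos mass ratio_sum]
    have "(\<Sum>x\<in>Q. \<phi> \<mu> x * log 2 (\<rho> x / \<nu> x)) \<le> log 2 6"
      by (simp add: log_def sum_divide_distrib[symmetric] divide_right_mono)
    then show "(\<Sum>x\<in>{x\<in>S. 0 < \<phi> \<mu> x}. \<phi> \<mu> x * log 2 (\<rho> x / \<nu> x)) \<le> log 2 6"
      unfolding Q_def .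
  qed
  then show ?thesis using \<nu>(1) by blast
qed

section \<open>Sums of Kullback-Leibler terms\<close>

lemma sum_kl_term_le_of_scaled_ge:
  fixes \<mu> \<nu> \<nu>' :: "'s \<Rightarrow> real"
  assumes "finite S" "\<forall>x\<in>S. 0 \<le> \<mu> x" "(\<Sum>x\<in>S. \<mu> x) = 1" "\<forall>x\<in>S. 0 \<le> \<nu> x"
    and "0 < w" "\<forall>x\<in>S. w * \<nu> x \<le> \<nu>' x"
  shows "(\<Sum>x\<in>S. kl_term (\<mu> x) (\<nu>' x)) \<le> (\<Sum>x\<in>S. kl_term (\<mu> x) (\<nu> x)) + ereal (log 2 (1 / w))"
proof -
  have "kl_term (\<mu> x) (\<nu>' x) \<le> kl_term (\<mu> x) (\<nu> x) + ereal (\<mu> x * log 2 (1 / w))" if "x \<in> S" for x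
  proof (cases "\<mu> x = 0 \<or> \<nu> x = 0")
    case True
    then show ?thesis by (auto simp: kl_term_def)
  next
    case False
    then have "0 < \<mu> x" "0 < \<nu> x"
      using assms(2,4) that by (auto simp: less_le)
    moreover have "0 < w * \<nu> x" using \<open>0 < \<nu> x\<close> assms(5) by simp
    moreover have "w * \<nu> x \<le> \<nu>' x" using assms(6) that by blast
    ultimately have pos: "0 < \<mu> x" "0 < \<nu> x" "0 < w * \<nu> x" "0 < \<nu>' x" by auto
    have "log 2 (\<mu> x / \<nu>' x) \<le> log 2 (\<mu> x / (w * \<nu> x))"
      using pos assms(6) that by (simp add: frac_le)
    also have "\<dots> = log 2 (\<mu> x / \<nu> x) + log 2 (1 / w)"
      using pos assms(5) by (simp add: log_divide log_mult)
    finally have "\<mu> x * log 2 (\<mu> x / \<nu>' x) \<le> \<mu> x * log 2 (\<mu> x / \<nu> x) + \<mu> x * log 2 (1 / w)"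
      using pos(1) by (simp add: distrib_left[symmetric])
    then show ?thesis using pos by (simp add: kl_term_def)
  qed
  then have "(\<Sum>x\<in>S. kl_term (\<mu> x) (\<nu>' x)) \<le> (\<Sum>x\<in>S. kl_term (\<mu> x) (\<nu> x) + ereal (\<mu> x * log 2 (1 / w)))"
    by (rule sum_mono)
  also have "\<dots> = (\<Sum>x\<in>S. kl_term (\<mu> x) (\<nu> x)) + ereal (log 2 (1 / w))"
    using assms(3) by (simp add: sum.distrib sum_distrib_right[symmetric])
  finally show ?thesis .
qed

lemma sum_kl_term_le_add:
  fixes \<mu> \<rho> \<nu> :: "'s \<Rightarrow> real"
  assumes "finite S" "\<forall>x\<in>S. 0 \<le> \<mu> x" "\<forall>x\<in>S. 0 \<le> \<rho> x"
    and "excess_loss_le S \<mu> \<rho> \<nu> B"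
  shows "(\<Sum>x\<in>S. kl_term (\<mu> x) (\<nu> x)) \<le> (\<Sum>x\<in>S. kl_term (\<mu> x) (\<rho> x)) + ereal B"
proof (cases "\<forall>x\<in>S. 0 < \<mu> x \<longrightarrow> 0 < \<rho> x")
  case False
  then obtain x where "x \<in> S" "0 < \<mu> x" "\<rho> x = 0"
    using assms(3) by (auto simp: less_le)
  then have "kl_term (\<mu> x) (\<rho> x) = \<infinity>" by (simp add: kl_term_def)
  then have "(\<Sum>x\<in>S. kl_term (\<mu> x) (\<rho> x)) = \<infinity>"
    using assms(1) \<open>x \<in> S\<close> by (auto simp: sum_Pinfty)
  then show ?thesis by simp
next
  case True
  with assms(4) [unfolded excess_loss_le_def] have \<nu>_pos: "\<forall>x\<in>S. 0 < \<mu> x \<longrightarrow> 0 < \<nu> x"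
    and bound: "(\<Sum>x\<in>{x\<in>S. 0 < \<mu> x}. \<mu> x * log 2 (\<rho> x / \<nu> x)) \<le> B" by auto
  define h where "h x = (if 0 < \<mu> x then \<mu> x * log 2 (\<rho> x / \<nu> x) else 0)" for x
  have "kl_term (\<mu> x) (\<nu> x) = kl_term (\<mu> x) (\<rho> x) + ereal (h x)" if "x \<in> S" for x
  proof (cases "0 < \<mu> x")
    case True
    then have "0 < \<rho> x" "0 < \<nu> x" using \<open>x \<in> S\<close> \<nu>_pos \<open>\<forall>x\<in>S. 0 < \<mu> x \<longrightarrow> 0 < \<rho> x\<close> by auto
    then have "log 2 (\<mu> x / \<nu> x) = log 2 (\<mu> x / \<rho> x) + log 2 (\<rho> x / \<nu> x)"
      using True by (simp add: log_divide)
    then show ?thesis using True \<open>0 < \<rho> x\<close> \<open>0 < \<nu> x\<close>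
      by (simp add: kl_term_def h_def distrib_left)
  next
    case False
    then have "\<mu> x = 0" using assms(2) that by (simp add: less_le)
    then show ?thesis by (simp add: kl_term_def h_def)
  qed
  then have "(\<Sum>x\<in>S. kl_term (\<mu> x) (\<nu> x)) = (\<Sum>x\<in>S. kl_term (\<mu> x) (\<rho> x)) + ereal (\<Sum>x\<in>S. h x)"
    by (simp add: sum.distrib)
  also have "(\<Sum>x\<in>S. h x) = (\<Sum>x\<in>{x\<in>S. 0 < \<mu> x}. \<mu> x * log 2 (\<rho> x / \<nu> x))"
    unfolding h_def using assms(1) by (simp add: sum.inter_filter)
  finally show ?thesis using bound by (simp add: add_left_mono)
qed

section \<open>Countable mixtures of measures on sequences\<close>

definition cylinder :: "'a set \<Rightarrow> 'a list \<Rightarrow> 'a stream set" where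
  "cylinder X xs = {\<omega> \<in> streams X. stake (length xs) \<omega> = xs}"

lemma sets_cylinder: "cylinder X xs \<in> sets (stream_space (count_space X))"
proof -
  have "cylinder X xs = {\<omega> \<in> space (stream_space (count_space X)). \<forall>i<length xs. \<omega> !! i = xs ! i}"
    unfolding cylinder_def space_stream_space space_count_space
    by (auto intro!: nth_equalityI) (metis stake_nth)
  also have "\<dots> \<in> sets (stream_space (count_space X))" by measurable
  finally show ?thesis .
qed

lemma space_seq_prob_measure: "seq_prob_measure X M \<Longrightarrow> space M = streams X"
  unfolding seq_prob_measure_def
  by (metis sets_eq_imp_space_eq space_count_space space_stream_space)

lemma seqprob_eq_measure_cylinder:
  "seq_prob_measure X M \<Longrightarrow> seqprob M xs = measure M (cylinder X xs)"
  unfolding seqprob_def cylinder_def by (simp add: space_seq_prob_measure)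

lemma emeasure_cylinder:
  "seq_prob_measure X M \<Longrightarrow> emeasure M (cylinder X xs) = ennreal (seqprob M xs)"
  by (simp add: seq_prob_measure_def seqprob_eq_measure_cylinder finite_measure.emeasure_eq_measure[OF prob_space.finite_measure])

lemma seqprob_nonneg: "0 \<le> seqprob M xs"
  unfolding seqprob_def by simp

definition words :: "'a set \<Rightarrow> nat \<Rightarrow> 'a list set" where
  "words X n = {xs. set xs \<subseteq> X \<and> length xs = n}"

lemma finite_words: "finite X \<Longrightarrow> finite (words X n)"
  unfolding words_def by (rule finite_lists_length_eq)

lemma logloss_eq_sum_words:
  "logloss X n \<mu> \<rho> = (\<Sum>xs\<in>words X n. kl_term (seqprob \<mu> xs) (seqprob \<rho> xs))"
  unfolding logloss_def words_def ..

lemma sum_seqprob_words: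
  assumes "seq_prob_measure X M" "finite X"
  shows "(\<Sum>xs\<in>words X n. seqprob M xs) = 1"
proof -
  have "set (stake n \<omega>) \<subseteq> X" if "\<omega> \<in> streams X" for \<omega>
    using that by (auto simp: in_set_conv_nth streams_iff_snth)
  then have "space M = (\<Union>xs\<in>words X n. cylinder X xs)"
    unfolding space_seq_prob_measure[OF assms(1)] words_def cylinder_def by auto
  moreover have "measure M (\<Union>xs\<in>words X n. cylinder X xs) = (\<Sum>xs\<in>words X n. measure M (cylinder X xs))"
    using finite_words[OF assms(2)] assms(1) sets_cylinder
    by (intro measure_finite_Union)
      (auto simp: disjoint_family_on_def cylinder_def words_def seq_prob_measure_def
        finite_measure.emeasure_eq_measure[OF prob_space.finite_measure])
  moreover have "measure M (space M) = 1"
    using assms(1) by (simp add: seq_prob_measure_def prob_space.prob_space)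
  ultimately show ?thesis
    using seqprob_eq_measure_cylinder[OF assms(1)] by simp
qed

lemma logloss_le_of_dominated_mixture:
  assumes "finite X" "seq_prob_measure X \<mu>" "\<forall>xs. 0 \<le> \<nu>' xs"
    and "0 < w" "\<forall>xs. w * \<nu>' xs \<le> seqprob \<nu> xs"
    and "excess_loss_le (words X n) (seqprob \<mu>) (seqprob \<rho>) \<nu>' B"
  shows "logloss X n \<mu> \<nu> \<le> logloss X n \<mu> \<rho> + ereal (B + log 2 (1 / w))"
proof -
  have "logloss X n \<mu> \<nu> \<le> (\<Sum>xs\<in>words X n. kl_term (seqprob \<mu> xs) (\<nu>' xs)) + ereal (log 2 (1 / w))"
    unfolding logloss_eq_sum_words using assms(1-5)
    by (intro sum_kl_term_le_of_scaled_ge) (simp_all add: finite_words sum_seqprob_words seqprob_nonneg)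
  also have "\<dots> \<le> logloss X n \<mu> \<rho> + ereal B + ereal (log 2 (1 / w))"
    unfolding logloss_eq_sum_words using assms(1,6)
    by (intro add_right_mono sum_kl_term_le_add) (simp_all add: finite_words seqprob_nonneg)
  finally show ?thesis by (simp add: add.assoc)
qed

lemma
  fixes P :: "nat pmf" and \<mu>s :: "nat \<Rightarrow> 'a stream measure"
  assumes "\<forall>k. seq_prob_measure X (\<mu>s k)"
  shows seq_prob_measure_bind_pmf: "seq_prob_measure X (measure_pmf P \<bind> \<mu>s)"
    and emeasure_bind_pmf_streams: "A \<in> sets (stream_space (count_space X)) \<Longrightarrow>
      emeasure (measure_pmf P \<bind> \<mu>s) A = (\<integral>\<^sup>+k. emeasure (\<mu>s k) A \<partial>P)"
proof -
  have P: "measure_pmf P \<in> space (prob_algebra (count_space UNIV))"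
    by (simp add: space_prob_algebra prob_space_measure_pmf)
  have \<mu>s: "\<mu>s \<in> count_space UNIV \<rightarrow>\<^sub>M prob_algebra (stream_space (count_space X))"
    using assms by (auto simp: measurable_count_space_eq1 space_prob_algebra seq_prob_measure_def)
  show "seq_prob_measure X (measure_pmf P \<bind> \<mu>s)"
    unfolding seq_prob_measure_def using prob_space_bind'[OF P \<mu>s] sets_bind'[OF P \<mu>s] by simp
  show "A \<in> sets (stream_space (count_space X)) \<Longrightarrow>
      emeasure (measure_pmf P \<bind> \<mu>s) A = (\<integral>\<^sup>+k. emeasure (\<mu>s k) A \<partial>P)"
    by (rule emeasure_bind_prob_algebra[OF P \<mu>s])
qed

lemma discrete_bayes_bind_pmf:
  fixes P :: "nat pmf"
  assumes "\<forall>\<mu>\<in>C. seq_prob_measure X \<mu>" "\<forall>k. \<mu>s k \<in> C"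
  shows "discrete_bayes X C (measure_pmf P \<bind> \<mu>s)"
proof -
  have \<mu>s: "\<forall>k. seq_prob_measure X (\<mu>s k)" using assms by blast
  have "emeasure (measure_pmf P \<bind> \<mu>s) A = (\<Sum>k. ennreal (pmf P k) * emeasure (\<mu>s k) A)"
    if "A \<in> sets (measure_pmf P \<bind> \<mu>s)" for A
  proof -
    have "A \<in> sets (stream_space (count_space X))"
      using that seq_prob_measure_bind_pmf[OF \<mu>s] by (simp add: seq_prob_measure_def)
    then show ?thesis
      by (simp add: emeasure_bind_pmf_streams[OF \<mu>s] nn_integral_measure_pmf nn_integral_count_space_nat)
  qed
  then show ?thesis
    unfolding discrete_bayes_def using seq_prob_measure_bind_pmf[OF \<mu>s] assms(2) pmf_le_1
    by (intro conjI exI[of _ "pmf P"] exI[of _ \<mu>s]) auto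
qed

lemma nn_integral_measure_pmf_ge_sum:
  fixes f :: "'b \<Rightarrow> ennreal"
  assumes "finite A"
  shows "(\<Sum>x\<in>A. f x * pmf p x) \<le> (\<integral>\<^sup>+x. f x \<partial>measure_pmf p)"
proof -
  have "(\<Sum>x\<in>A. f x * pmf p x) = (\<integral>\<^sup>+x. f x * indicator A x \<partial>measure_pmf p)"
    using assms by (simp add: nn_integral_indicator_finite emeasure_pmf_single)
  also have "\<dots> \<le> (\<integral>\<^sup>+x. f x \<partial>measure_pmf p)"
    by (intro nn_integral_mono) (simp split: split_indicator)
  finally show ?thesis .
qed

lemma pmf_embed_pmf_sums:
  fixes f :: "nat \<Rightarrow> real"
  assumes "\<forall>n. 0 \<le> f n" "f sums 1"
  shows "pmf (embed_pmf f) n = f n"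
proof (rule pmf_embed_pmf)
  show "(\<integral>\<^sup>+x. ennreal (f x) \<partial>count_space UNIV) = 1"
    using assms by (simp add: nn_integral_count_space_nat suminf_ennreal_eq sums_iff)
qed (use assms in auto)

lemma exists_discrete_bayes_dominating:
  fixes \<nu>s :: "nat \<Rightarrow> 'a list \<Rightarrow> real" and w :: "nat \<Rightarrow> real"
  assumes "\<forall>\<mu>\<in>C. seq_prob_measure X \<mu>" "C \<noteq> {}" "\<forall>n. \<nu>s n \<in> mixtures C seqprob"
    and "\<forall>n. 0 \<le> w n" "w sums 1"
  shows "\<exists>\<nu>. discrete_bayes X C \<nu> \<and> (\<forall>n xs. w n * \<nu>s n xs \<le> seqprob \<nu> xs)"
proof -
  obtain \<mu>0 where \<mu>0: "\<mu>0 \<in> C" using assms(2) by blast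
  have "\<forall>n. \<exists>(m :: nat) c g. \<nu>s n = (\<lambda>xs. \<Sum>j<m. c j * seqprob (g j) xs) \<and>
      (\<forall>j<m. g j \<in> C \<and> 0 \<le> c j) \<and> (\<Sum>j<m. c j) = 1"
    using assms(3) unfolding mixtures_def mem_Collect_eq .
  then have "\<exists>(m :: nat \<Rightarrow> nat) c g. \<forall>n. \<nu>s n = (\<lambda>xs. \<Sum>j<m n. c n j * seqprob (g n j) xs) \<and>
      (\<forall>j<m n. g n j \<in> C \<and> 0 \<le> c n j) \<and> (\<Sum>j<m n. c n j) = 1"
    by (simp only: choice_iff)
  then obtain m :: "nat \<Rightarrow> nat" and c g where mcg: "\<And>n j. j < m n \<Longrightarrow> g n j \<in> C \<and> 0 \<le> c n j"
    "\<And>n. (\<Sum>j<m n. c n j) = 1" "\<And>n. \<nu>s n = (\<lambda>xs. \<Sum>j<m n. c n j * seqprob (g n j) xs)"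
    by blast
  \<comment> \<open>\<open>\<nu>\<close> draws \<open>n\<close> with probability \<open>w n\<close>, then the \<open>j\<close>-th component of \<open>\<nu>s n\<close>;
    the pair \<open>(n, j)\<close> is encoded as one natural number, as \<open>discrete_bayes\<close> indexes components by \<open>nat\<close>\<close>
  define p where "p n = embed_pmf (\<lambda>j. if j \<in> {..<m n} then c n j else 0)" for n
  have pmf_p: "pmf (p n) j = c n j" if "j < m n" for n j
    unfolding p_def using that mcg(1,2) sums_If_finite_set[of "{..<m n}" "c n"]
    by (subst pmf_embed_pmf_sums) auto
  define P where "P = bind_pmf (embed_pmf w) (\<lambda>n. map_pmf (\<lambda>j. prod_encode (n, j)) (p n))"
  define \<mu>s where "\<mu>s k = (case prod_decode k of (n, j) \<Rightarrow> if j < m n then g n j else \<mu>0)" for k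
  have \<mu>s_C: "\<forall>k. \<mu>s k \<in> C" unfolding \<mu>s_def using mcg(1) \<mu>0 by (auto split: prod.splits)
  then have \<mu>s: "\<forall>k. seq_prob_measure X (\<mu>s k)" using assms(1) by blast
  define \<nu> where "\<nu> = measure_pmf P \<bind> \<mu>s"
  have "w n * \<nu>s n xs \<le> seqprob \<nu> xs" for n xs
  proof -
    let ?F = "\<lambda>k. emeasure (\<mu>s k) (cylinder X xs)"
    have "?F (prod_encode (n, j)) * pmf (p n) j = ennreal (c n j * seqprob (g n j) xs)" if "j < m n" for j
      using that mcg(1)[OF that] assms(1) pmf_p[OF that]
      by (simp add: \<mu>s_def emeasure_cylinder ennreal_mult' seqprob_nonneg mult.commute)
    then have "(\<Sum>j<m n. ?F (prod_encode (n, j)) * pmf (p n) j) =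
        (\<Sum>j<m n. ennreal (c n j * seqprob (g n j) xs))"
      by (intro sum.cong) auto
    also have "\<dots> = ennreal (\<nu>s n xs)"
      unfolding mcg(3) using mcg(1) by (intro sum_ennreal) (simp add: seqprob_nonneg)
    finally have "ennreal (w n * \<nu>s n xs) = (\<Sum>j<m n. ?F (prod_encode (n, j)) * pmf (p n) j) * pmf (embed_pmf w) n"
      using assms(4,5) by (simp add: pmf_embed_pmf_sums ennreal_mult' mult.commute)
    also have "\<dots> \<le> (\<integral>\<^sup>+j. ?F (prod_encode (n, j)) \<partial>p n) * pmf (embed_pmf w) n"
      by (intro mult_right_mono nn_integral_measure_pmf_ge_sum) auto
    also have "\<dots> \<le> (\<integral>\<^sup>+n'. (\<integral>\<^sup>+j. ?F (prod_encode (n', j)) \<partial>p n') \<partial>embed_pmf w)"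
      using nn_integral_measure_pmf_ge_sum[of "{n}"] by simp
    also have "\<dots> = emeasure \<nu> (cylinder X xs)"
      unfolding \<nu>_def emeasure_bind_pmf_streams[OF \<mu>s sets_cylinder] P_def by simp
    also have "\<dots> = ennreal (seqprob \<nu> xs)"
      unfolding \<nu>_def by (rule emeasure_cylinder[OF seq_prob_measure_bind_pmf[OF \<mu>s]])
    finally show ?thesis by (simp add: seqprob_nonneg)
  qed
  moreover have "discrete_bayes X C \<nu>"
    unfolding \<nu>_def using assms(1) \<mu>s_C by (rule discrete_bayes_bind_pmf)
  ultimately show ?thesis by blast
qed

lemma pronic_inverse_sums: "(\<lambda>n. 1 / (real (Suc n) * real (Suc (Suc n)))) sums 1"
proof -
  have "(\<lambda>n. inverse (real (Suc n)) - inverse (real (Suc (Suc n)))) sums (inverse (real (Suc 0)) - 0)"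
    by (rule telescope_sums'[OF LIMSEQ_inverse_real_of_nat])
  moreover have "inverse (real (Suc n)) - inverse (real (Suc (Suc n))) = 1 / (real (Suc n) * real (Suc (Suc n)))" for n
    by (simp add: field_simps)
  ultimately show ?thesis by simp
qed

lemma log_pronic_bound:
  fixes n :: nat
  assumes "2 \<le> n"
  shows "log 2 6 + log 2 (real (Suc n) * real (Suc (Suc n))) \<le> 8 * log 2 (real n)"
proof -
  have "Suc n * Suc (Suc n) \<le> (2 * n) * (2 * n)"
    using assms by (intro mult_le_mono) auto
  then have "6 * (Suc n * Suc (Suc n)) \<le> 24 * n\<^sup>2"
    by (simp add: power2_eq_square)
  also have "24 * n\<^sup>2 \<le> n ^ 6 * n\<^sup>2"
    using power_mono[of 2 n 6] assms by (intro mult_right_mono) auto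
  also have "\<dots> = n ^ 8" by (simp flip: power_add)
  finally have "6 * (Suc n * Suc (Suc n)) \<le> n ^ 8" .
  then have "6 * (real (Suc n) * real (Suc (Suc n))) \<le> real n ^ 8"
    by (metis of_nat_le_iff of_nat_mult of_nat_numeral of_nat_power)
  then have "log 2 (6 * (real (Suc n) * real (Suc (Suc n)))) \<le> log 2 (real n ^ 8)"
    by (intro log_mono) auto
  then show ?thesis
    using assms by (simp add: log_mult log_nat_power)
qed

theorem theorem1:
  shows "\<exists>a b :: real. \<exists>N :: nat. \<forall>(X :: 'a set) C \<rho>.
     finite X \<and> C \<noteq> {} \<and> (\<forall>\<mu>\<in>C. seq_prob_measure X \<mu>) \<and> seq_prob_measure X \<rho> \<longrightarrow>
     (\<exists>\<nu>. discrete_bayes X C \<nu> \<and>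
        (\<forall>\<mu>\<in>C. \<forall>n\<ge>N.
           logloss X n \<mu> \<nu> \<le> logloss X n \<mu> \<rho> +
             ereal (8 * log 2 (real n) + (a + b * log 2 (real (card X))) * log 2 (log 2 (real n)))))"
proof (intro exI[of _ "0 :: real"] exI[of _ "2 :: nat"] allI impI)
  fix X :: "'a set" and C \<rho>
  assume "finite X \<and> C \<noteq> {} \<and> (\<forall>\<mu>\<in>C. seq_prob_measure X \<mu>) \<and> seq_prob_measure X \<rho>"
  then have X: "finite X" and C: "C \<noteq> {}" "\<forall>\<mu>\<in>C. seq_prob_measure X \<mu>"
    and \<rho>: "seq_prob_measure X \<rho>" by auto
  have "\<forall>n. \<exists>\<nu>\<in>mixtures C seqprob. \<forall>\<mu>\<in>C. excess_loss_le (words X n) (seqprob \<mu>) (seqprob \<rho>) \<nu> (log 2 6)"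
    using X C \<rho> by (intro allI exists_mixture_excess_loss_le)
      (simp_all add: finite_words sum_seqprob_words seqprob_nonneg)
  then obtain \<nu>s where \<nu>s: "\<forall>n. \<nu>s n \<in> mixtures C seqprob"
      "\<forall>n. \<forall>\<mu>\<in>C. excess_loss_le (words X n) (seqprob \<mu>) (seqprob \<rho>) (\<nu>s n) (log 2 6)"
    unfolding Bex_def choice_iff by blast
  define w where "w n = 1 / (real (Suc n) * real (Suc (Suc n)))" for n
  obtain \<nu> where \<nu>: "discrete_bayes X C \<nu>" "\<And>n xs. w n * \<nu>s n xs \<le> seqprob \<nu> xs"
    using exists_discrete_bayes_dominating[OF C(2,1) \<nu>s(1), of w] pronic_inverse_sums
    unfolding w_def by auto
  have "logloss X n \<mu> \<nu> \<le> logloss X n \<mu> \<rho> + ereal (8 * log 2 (real n))"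
    if \<mu>: "\<mu> \<in> C" and n: "2 \<le> n" for \<mu> n
  proof -
    have "logloss X n \<mu> \<nu> \<le> logloss X n \<mu> \<rho> + ereal (log 2 6 + log 2 (1 / w n))"
      using X C(2) \<mu> \<nu>(2) \<nu>s mixtures_nonneg[OF \<nu>s(1)[rule_format]]
      by (intro logloss_le_of_dominated_mixture[where \<nu>' = "\<nu>s n"]) (auto simp: w_def seqprob_nonneg)
    also have "\<dots> \<le> logloss X n \<mu> \<rho> + ereal (8 * log 2 (real n))"
      using log_pronic_bound[OF n] by (intro add_left_mono) (simp add: w_def)
    finally show ?thesis .
  qed
  then show "\<exists>\<nu>. discrete_bayes X C \<nu> \<and> (\<forall>\<mu>\<in>C. \<forall>n\<ge>2. logloss X n \<mu> \<nu> \<le> logloss X n \<mu> \<rho> +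
      ereal (8 * log 2 (real n) + (0 + 0 * log 2 (real (card X))) * log 2 (log 2 (real n))))"
    using \<nu>(1) by auto
qed

end
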